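(* (Passivity of the Soft-PVTOL.) Let $m,m_l,m_r,I,I_l,I_r,l_l,l_r,g_0>0$, let $\tau:[0,T]\to\mathbb{R}^5$ be continuous, and let $\mathbf{q}:[0,T]\to\mathbb{R}^5$ be a $C^2$ solution of $D(\mathbf{q})\ddot{\mathbf{q}}+C(\mathbf{q},\dot{\mathbf{q}})\dot{\mathbf{q}}+g(\mathbf{q})=\tau$. Let $H=\frac12\dot{\mathbf{q}}^{\intercal}D(\mathbf{q})\dot{\mathbf{q}}+\mathcal{P}(\mathbf{q})$ with $\mathcal{P}(\mathbf{q})=g_0\big(\Theta_1z_v+m_ll_l\frac{1-\cos q_l}{q_l}+m_rl_r\frac{1-\cos q_r}{q_r}\big)$. Then $\frac{d}{dt}H(t)=\dot{\mathbf{q}}(t)^{\intercal}\tau(t)$ for all $t\in[0,T]$; consequently $\int_0^T\dot{\mathbf{q}}^{\intercal}\tau\,dt=H(T)-H(0)\ge -H(0)+\min\mathcal{P}$ along the solution, i.e. the map $\tau\mapsto\dot{\mathbf{q}}$ is passive with storage function $H$ (up to the lower bound of $\mathcal{P}$ on the relevant set).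
   Context: Coordinates $\mathbf{q}=(x_v,z_v,\theta,q_l,q_r)^{\intercal}$. Quotients are extended continuously at $q_l=0$ or $q_r=0$ (removable singularities). Set $\Theta_1=m+m_l+m_r$, $\Theta_2=I$, $\Theta_3=l_lm_l$, $\Theta_4=l_rm_r$, $\Theta_5=I_l$, $\Theta_6=I_r$. $\mathscr{D}_1=\frac{\sin q_l-q_l\cos q_l}{q_l^2}$, $\mathscr{D}_2=\frac{\cos q_l+q_l\sin q_l-1}{q_l^2}$, $\mathscr{D}_3=\frac{q_r\cos q_r-\sin q_r}{q_r^2}$, $\mathscr{D}_4=\frac{\cos q_r+q_r\sin q_r-1}{q_r^2}$, $\mathscr{D}_5=\frac{q_l^2+2-2\cos q_l-2q_l\sin q_l}{q_l^4}$, $\mathscr{D}_6=\frac{q_r^2+2-2\cos q_r-2q_r\sin q_r}{q_r^4}$. $$D(\mathbf{q})=\begin{pmatrix}\Theta_1&0&0&\Theta_3\mathscr{D}_1&\Theta_4\mathscr{D}_3\\0&\Theta_1&0&\Theta_3\mathscr{D}_2&\Theta_4\mathscr{D}_4\\0&0&\Theta_2&0&0\\\Theta_3\mathscr{D}_1&\Theta_3\mathscr{D}_2&0&l_l\Theta_3\mathscr{D}_5+\Theta_5&0\\\Theta_4\mathscr{D}_3&\Theta_4\mathscr{D}_4&0&0&l_r\Theta_4\mathscr{D}_6+\Theta_6\end{pmatrix}.$$ $\mathscr{C}_1=\frac{(q_l^2-2)\sin q_l+2q_l\cos q_l}{q_l^3}$, $\mathscr{C}_2=\frac{(q_l^2-2)\cos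 q_l-2q_l\sin q_l+2}{q_l^3}$, $\mathscr{C}_3=\frac{(q_r^2-2)\sin q_r+2q_r\cos q_r}{q_r^3}$, $\mathscr{C}_4=\frac{(q_r^2-2)\cos q_r-2q_r\sin q_r+2}{q_r^3}$, $\mathscr{C}_5=\frac{(q_l\cos(q_l/2)-2\sin(q_l/2))^2}{q_l^5}$, $\mathscr{C}_6=\frac{(q_r\cos(q_r/2)-2\sin(q_r/2))^2}{q_r^5}$. $$C(\mathbf{q},\dot{\mathbf{q}})=\begin{pmatrix}0&0&0&\Theta_3\mathscr{C}_1\dot q_l&-\Theta_4\mathscr{C}_3\dot q_r\\0&0&0&\Theta_3\mathscr{C}_2\dot q_l&\Theta_4\mathscr{C}_4\dot q_r\\0&0&0&0&0\\0&0&0&-2l_l\Theta_3\mathscr{C}_5\dot q_l&0\\0&0&0&0&-2l_r\Theta_4\mathscr{C}_6\dot q_r\end{pmatrix}.$$ $$g(\mathbf{q})=\Big(0,\ g_0\Theta_1,\ 0,\ g_0m_ll_l\tfrac{q_l\sin q_l+\cos q_l-1}{q_l^2},\ g_0m_rl_r\tfrac{q_r\sin q_r+\cos q_r-1}{q_r^2}\Big)^{\intercal}.$$ *)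

theory Defs
  imports "HOL-Analysis.Analysis"
begin

text \<open>Coordinates q = (x_v, z_v, theta, q_l, q_r) in real^5, with
  components q$1, ..., q$5 (built with the library constructor vector [_,_,_,_,_]).
  The quotients are extended continuously at q_l = 0 / q_r = 0 (values given by the limits).\<close>

definition Dc1 :: "real \<Rightarrow> real" where
  "Dc1 x = (if x = 0 then 0 else (sin x - x * cos x) / x^2)"
definition Dc2 :: "real \<Rightarrow> real" where
  "Dc2 x = (if x = 0 then 1/2 else (cos x + x * sin x - 1) / x^2)"
definition Dc3 :: "real \<Rightarrow> real" where
  "Dc3 x = (if x = 0 then 0 else (x * cos x - sin x) / x^2)"
definition Dc4 :: "real \<Rightarrow> real" where
  "Dc4 x = (if x = 0 then 1/2 else (cos x + x * sin x - 1) / x^2)"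
definition Dc5 :: "real \<Rightarrow> real" where
  "Dc5 x = (if x = 0 then 1/4 else (x^2 + 2 - 2 * cos x - 2 * x * sin x) / x^4)"
definition Dc6 :: "real \<Rightarrow> real" where
  "Dc6 x = (if x = 0 then 1/4 else (x^2 + 2 - 2 * cos x - 2 * x * sin x) / x^4)"

definition Cc1 :: "real \<Rightarrow> real" where
  "Cc1 x = (if x = 0 then 1/3 else ((x^2 - 2) * sin x + 2 * x * cos x) / x^3)"
definition Cc2 :: "real \<Rightarrow> real" where
  "Cc2 x = (if x = 0 then 0 else ((x^2 - 2) * cos x - 2 * x * sin x + 2) / x^3)"
definition Cc3 :: "real \<Rightarrow> real" where
  "Cc3 x = (if x = 0 then 1/3 else ((x^2 - 2) * sin x + 2 * x * cos x) / x^3)"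
definition Cc4 :: "real \<Rightarrow> real" where
  "Cc4 x = (if x = 0 then 0 else ((x^2 - 2) * cos x - 2 * x * sin x + 2) / x^3)"
definition Cc5 :: "real \<Rightarrow> real" where
  "Cc5 x = (if x = 0 then 0 else (x * cos (x/2) - 2 * sin (x/2))^2 / x^5)"
definition Cc6 :: "real \<Rightarrow> real" where
  "Cc6 x = (if x = 0 then 0 else (x * cos (x/2) - 2 * sin (x/2))^2 / x^5)"

definition Gq :: "real \<Rightarrow> real" where
  "Gq x = (if x = 0 then 1/2 else (x * sin x + cos x - 1) / x^2)"
definition Pq :: "real \<Rightarrow> real" where
  "Pq x = (if x = 0 then 0 else (1 - cos x) / x)"

definition Dmat :: "real \<Rightarrow> real \<Rightarrow> real \<Rightarrow> real \<Rightarrow> real \<Rightarrow> real \<Rightarrow> real \<Rightarrow> real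
    \<Rightarrow> real^5 \<Rightarrow> real^5^5" where
  "Dmat m ml mr I Il Ir ll lr q =
    (let Th1 = m + ml + mr; Th2 = I; Th3 = ll * ml; Th4 = lr * mr; Th5 = Il; Th6 = Ir;
         ql = q$4; qr = q$5 in
     vector [
       vector [Th1, 0, 0, Th3 * Dc1 ql, Th4 * Dc3 qr],
       vector [0, Th1, 0, Th3 * Dc2 ql, Th4 * Dc4 qr],
       vector [0, 0, Th2, 0, 0],
       vector [Th3 * Dc1 ql, Th3 * Dc2 ql, 0, ll * Th3 * Dc5 ql + Th5, 0],
       vector [Th4 * Dc3 qr, Th4 * Dc4 qr, 0, 0, lr * Th4 * Dc6 qr + Th6]])"

definition Cmat :: "real \<Rightarrow> real \<Rightarrow> real \<Rightarrow> real \<Rightarrow> real \<Rightarrow> real \<Rightarrow> real \<Rightarrow> real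
    \<Rightarrow> real^5 \<Rightarrow> real^5 \<Rightarrow> real^5^5" where
  "Cmat m ml mr I Il Ir ll lr q dq =
    (let Th3 = ll * ml; Th4 = lr * mr; ql = q$4; qr = q$5; dql = dq$4; dqr = dq$5 in
     vector [
       vector [0, 0, 0, Th3 * Cc1 ql * dql, - Th4 * Cc3 qr * dqr],
       vector [0, 0, 0, Th3 * Cc2 ql * dql, Th4 * Cc4 qr * dqr],
       vector [0, 0, 0, 0, 0],
       vector [0, 0, 0, -2 * ll * Th3 * Cc5 ql * dql, 0],
       vector [0, 0, 0, 0, -2 * lr * Th4 * Cc6 qr * dqr]])"

definition gvec :: "real \<Rightarrow> real \<Rightarrow> real \<Rightarrow> real \<Rightarrow> real \<Rightarrow> real
    \<Rightarrow> real^5 \<Rightarrow> real^5" where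
  "gvec m ml mr ll lr g0 q =
    vector [0, g0 * (m + ml + mr), 0, g0 * ml * ll * Gq (q$4), g0 * mr * lr * Gq (q$5)]"

definition Pot :: "real \<Rightarrow> real \<Rightarrow> real \<Rightarrow> real \<Rightarrow> real \<Rightarrow> real \<Rightarrow> real^5 \<Rightarrow> real" where
  "Pot m ml mr ll lr g0 q =
    g0 * ((m + ml + mr) * q$2 + ml * ll * Pq (q$4) + mr * lr * Pq (q$5))"

definition Ham :: "real \<Rightarrow> real \<Rightarrow> real \<Rightarrow> real \<Rightarrow> real \<Rightarrow> real \<Rightarrow> real \<Rightarrow> real \<Rightarrow> real
    \<Rightarrow> real^5 \<Rightarrow> real^5 \<Rightarrow> real" where
  "Ham m ml mr I Il Ir ll lr g0 q dq =
    1/2 * (dq \<bullet> (Dmat m ml mr I Il Ir ll lr q *v dq)) + Pot m ml mr ll lr g0 q"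

end

theory Submission
  imports Defs "HOL-Real_Asymp.Real_Asymp"
begin

text \<open>The coefficient functions extend smoothly through \<open>0\<close> and satisfy
  \<open>Dc1' = Cc1\<close>, \<open>Dc2' = Cc2\<close>, \<open>Dc5' = -4 Cc5\<close>, \<open>Pq' = Gq\<close>, while the right-hand
  ones repeat the left-hand ones (\<open>Dc3 = -Dc1\<close>, \<open>Dc4 = Dc2\<close>, \<open>Dc6 = Dc5\<close>, ...).
  With these, \<open>v\<^sup>T (D'/2 - C) v = 0\<close> for the velocity \<open>v\<close> and \<open>d/dt P(q) = v\<^sup>T g(q)\<close>, so
  along every trajectory \<open>dH/dt = v\<^sup>T (D q'' + C v + g)\<close>, which is \<open>v\<^sup>T \<tau>\<close> along
  solutions; the fundamental theorem of calculus then gives the integral identity.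
  Since \<open>Dc5 = Dc1\<^sup>2 + Dc2\<^sup>2\<close>, the kinetic energy is a mass-weighted sum of squares,
  whence \<open>H \<ge> P(q) \<ge> inf P\<close>.\<close>

lemma has_real_derivative_removable_singularity:
  fixes f g :: "real \<Rightarrow> real"
  assumes f_eq: "\<And>x. x \<noteq> 0 \<Longrightarrow> f x = g x"
    and g_deriv: "\<And>x. x \<noteq> 0 \<Longrightarrow> (g has_real_derivative g' x) (at x)"
    and quotient_lim: "((\<lambda>x. (g x - f 0) / x) \<longlongrightarrow> d) (at 0)"
  shows "(f has_real_derivative (if x = 0 then d else g' x)) (at x)"
proof (cases "x = 0")
  case True
  have "((\<lambda>y. (f y - f 0) / (y - 0)) \<longlongrightarrow> d) (at 0)"
    using quotient_lim by (rule Lim_transform_eventually) (auto simp: eventually_at_filter f_eq)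
  then show ?thesis using True by (simp add: has_field_derivative_iff)
next
  case False
  have "(f has_real_derivative g' x) (at x)"
    using g_deriv[OF False]
    by (rule has_field_derivative_transform_within_open[where S="-{0}"]) (use False f_eq in auto)
  then show ?thesis using False by simp
qed

lemma Dc1_has_real_derivative: "(Dc1 has_real_derivative Cc1 x) (at x)"
proof -
  have "(Dc1 has_real_derivative
      (if x = 0 then 1/3 else ((x^2 - 2) * sin x + 2 * x * cos x) / x^3)) (at x)"
  proof (rule has_real_derivative_removable_singularity[where g="\<lambda>x. (sin x - x * cos x) / x^2"])
    fix y :: real assume "y \<noteq> 0"
    then show "((\<lambda>x. (sin x - x * cos x) / x^2) has_real_derivative
        ((y^2 - 2) * sin y + 2 * y * cos y) / y^3) (at y)"
      by (auto intro!: derivative_eq_intros simp: field_simps power2_eq_square power3_eq_cube)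
  next
    show "((\<lambda>x. ((sin x - x * cos x) / x^2 - Dc1 0) / x) \<longlongrightarrow> 1/3) (at 0)"
      by (simp add: Dc1_def) real_asymp
  qed (simp add: Dc1_def)
  then show ?thesis by (simp add: Cc1_def)
qed

lemma Dc2_has_real_derivative: "(Dc2 has_real_derivative Cc2 x) (at x)"
proof -
  have "(Dc2 has_real_derivative
      (if x = 0 then 0 else ((x^2 - 2) * cos x - 2 * x * sin x + 2) / x^3)) (at x)"
  proof (rule has_real_derivative_removable_singularity[where g="\<lambda>x. (cos x + x * sin x - 1) / x^2"])
    fix y :: real assume "y \<noteq> 0"
    then show "((\<lambda>x. (cos x + x * sin x - 1) / x^2) has_real_derivative
        ((y^2 - 2) * cos y - 2 * y * sin y + 2) / y^3) (at y)"
      by (auto intro!: derivative_eq_intros simp: field_simps power2_eq_square power3_eq_cube)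
  next
    show "((\<lambda>x. ((cos x + x * sin x - 1) / x^2 - Dc2 0) / x) \<longlongrightarrow> 0) (at 0)"
      by (simp add: Dc2_def) real_asymp
  qed (simp add: Dc2_def)
  then show ?thesis by (simp add: Cc2_def)
qed

lemma sq_half_angle_combination:
  fixes x :: real
  shows "(x * cos (x/2) - 2 * sin (x/2))^2 = x^2 * (1 + cos x) / 2 - 2 * x * sin x + 2 * (1 - cos x)"
proof -
  define y where "y = x/2"
  have x: "x = 2 * y" by (simp add: y_def)
  have double: "cos x = cos y ^ 2 - sin y ^ 2" "sin x = 2 * sin y * cos y"
    unfolding x by (simp_all add: cos_double sin_double)
  have pythagoras: "sin y ^ 2 + cos y ^ 2 = 1" by simp
  show ?thesis unfolding double y_def[symmetric] unfolding x
    by (simp add: field_simps) (use pythagoras in algebra)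
qed

lemma Dc5_has_real_derivative: "(Dc5 has_real_derivative - 4 * Cc5 x) (at x)"
proof -
  have "(Dc5 has_real_derivative (if x = 0 then 0 else
      (- 2 * x^2 - 2 * x^2 * cos x - 8 + 8 * cos x + 8 * x * sin x) / x^5)) (at x)"
  proof (rule has_real_derivative_removable_singularity
      [where g="\<lambda>x. (x^2 + 2 - 2 * cos x - 2 * x * sin x) / x^4"])
    fix y :: real assume "y \<noteq> 0"
    then show "((\<lambda>x. (x^2 + 2 - 2 * cos x - 2 * x * sin x) / x^4) has_real_derivative
        (- 2 * y^2 - 2 * y^2 * cos y - 8 + 8 * cos y + 8 * y * sin y) / y^5) (at y)"
      by (auto intro!: derivative_eq_intros
          simp: field_simps power2_eq_square power3_eq_cube eval_nat_numeral)
  next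
    show "((\<lambda>x. ((x^2 + 2 - 2 * cos x - 2 * x * sin x) / x^4 - Dc5 0) / x) \<longlongrightarrow> 0) (at 0)"
      by (simp add: Dc5_def) real_asymp
  qed (simp add: Dc5_def)
  moreover have "(if x = 0 then 0 else
      (- 2 * x^2 - 2 * x^2 * cos x - 8 + 8 * cos x + 8 * x * sin x) / x^5) = - 4 * Cc5 x"
    unfolding Cc5_def sq_half_angle_combination by (simp add: field_simps)
  ultimately show ?thesis by simp
qed

lemma Pq_has_real_derivative: "(Pq has_real_derivative Gq x) (at x)"
proof -
  have "(Pq has_real_derivative (if x = 0 then 1/2 else (x * sin x + cos x - 1) / x^2)) (at x)"
  proof (rule has_real_derivative_removable_singularity[where g="\<lambda>x. (1 - cos x) / x"])
    fix y :: real assume "y \<noteq> 0"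
    then show "((\<lambda>x. (1 - cos x) / x) has_real_derivative (y * sin y + cos y - 1) / y^2) (at y)"
      by (auto intro!: derivative_eq_intros simp: field_simps power2_eq_square)
  next
    show "((\<lambda>x. ((1 - cos x) / x - Pq 0) / x) \<longlongrightarrow> 1/2) (at 0)"
      by (simp add: Pq_def) real_asymp
  qed (simp add: Pq_def)
  then show ?thesis by (simp add: Gq_def)
qed

lemmas coefficient_has_real_derivative_chain =
  DERIV_chain2[OF Dc1_has_real_derivative] DERIV_chain2[OF Dc2_has_real_derivative]
  DERIV_chain2[OF Dc5_has_real_derivative] DERIV_chain2[OF Pq_has_real_derivative]

lemma right_coefficients_eq:
  "Dc3 = (\<lambda>x. - Dc1 x)" "Dc4 = Dc2" "Dc6 = Dc5" "Cc3 = Cc1" "Cc4 = Cc2" "Cc6 = Cc5"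
  by (auto simp: fun_eq_iff Dc1_def Dc2_def Dc3_def Dc4_def Dc5_def Dc6_def
      Cc1_def Cc3_def Cc2_def Cc4_def Cc5_def Cc6_def field_simps)

lemma Dc5_eq_sum_squares: "Dc5 x = Dc1 x ^ 2 + Dc2 x ^ 2"
proof (cases "x = 0")
  case False
  have pythagoras: "sin x ^ 2 + cos x ^ 2 = 1" by simp
  show ?thesis using False
    by (simp add: Dc1_def Dc2_def Dc5_def field_simps) (use pythagoras in algebra)
qed (simp add: Dc1_def Dc2_def Dc5_def power2_eq_square)

lemma exhaust_5:
  fixes x :: 5
  shows "x = 1 \<or> x = 2 \<or> x = 3 \<or> x = 4 \<or> x = 5"
proof (induct x)
  case (of_int z)
  then have "z = 0 \<or> z = 1 \<or> z = 2 \<or> z = 3 \<or> z = 4" by fastforce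
  then show ?case by auto
qed

lemma UNIV_5: "UNIV = {1, 2, 3, 4, 5::5}"
  using exhaust_5 by auto

lemma sum_5: "sum f (UNIV::5 set) = f 1 + f 2 + f 3 + f 4 + f 5"
  unfolding UNIV_5 by (simp add: ac_simps)

lemma vector_5 [simp]:
  "(vector [a, b, c, d, e] :: 'a::zero^5) $ 1 = a"
  "(vector [a, b, c, d, e] :: 'a::zero^5) $ 2 = b"
  "(vector [a, b, c, d, e] :: 'a::zero^5) $ 3 = c"
  "(vector [a, b, c, d, e] :: 'a::zero^5) $ 4 = d"
  "(vector [a, b, c, d, e] :: 'a::zero^5) $ 5 = e"
  unfolding vector_def by simp_all

lemma Ham_explicit:
  "Ham m ml mr I Il Ir ll lr g0 q d =
    1/2 * ((m + ml + mr) * (d$1^2 + d$2^2) + I * d$3^2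
      + 2 * ll * ml * (Dc1 (q$4) * d$1 + Dc2 (q$4) * d$2) * d$4
      + 2 * lr * mr * (Dc2 (q$5) * d$2 - Dc1 (q$5) * d$1) * d$5
      + (ll^2 * ml * Dc5 (q$4) + Il) * d$4^2 + (lr^2 * mr * Dc5 (q$5) + Ir) * d$5^2)
    + Pot m ml mr ll lr g0 q"
  unfolding Ham_def Dmat_def Let_def inner_vec_def matrix_vector_mult_def sum_5 right_coefficients_eq
  by (simp add: algebra_simps power2_eq_square)

lemma Pot_le_Ham:
  assumes "m \<ge> 0" "ml \<ge> 0" "mr \<ge> 0" "I \<ge> 0" "Il \<ge> 0" "Ir \<ge> 0"
  shows "Pot m ml mr ll lr g0 q \<le> Ham m ml mr I Il Ir ll lr g0 q d"
proof -
  have "Ham m ml mr I Il Ir ll lr g0 q d - Pot m ml mr ll lr g0 q =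
    1/2 * (m * (d$1^2 + d$2^2) + I * d$3^2 + Il * d$4^2 + Ir * d$5^2
      + ml * ((d$1 + ll * Dc1 (q$4) * d$4)^2 + (d$2 + ll * Dc2 (q$4) * d$4)^2)
      + mr * ((d$1 - lr * Dc1 (q$5) * d$5)^2 + (d$2 + lr * Dc2 (q$5) * d$5)^2))"
    unfolding Ham_explicit Dc5_eq_sum_squares by (simp add: algebra_simps power2_eq_square)
  also have "\<dots> \<ge> 0" using assms by (intro mult_nonneg_nonneg add_nonneg_nonneg) auto
  finally show ?thesis by simp
qed

lemma has_real_derivative_vec_nth:
  assumes "(f has_vector_derivative f') F"
  shows "((\<lambda>s. f s $ i) has_real_derivative f' $ i) F"
  using bounded_linear.has_vector_derivative[OF bounded_linear_vec_nth assms]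
  by (simp add: has_real_derivative_iff_has_vector_derivative)

lemma Ham_has_real_derivative:
  fixes q dq :: "real \<Rightarrow> real^5"
  assumes q: "(q has_vector_derivative dq t) (at t within S)"
    and dq: "(dq has_vector_derivative ddq) (at t within S)"
  shows "((\<lambda>s. Ham m ml mr I Il Ir ll lr g0 (q s) (dq s)) has_real_derivative
      dq t \<bullet> (Dmat m ml mr I Il Ir ll lr (q t) *v ddq
        + Cmat m ml mr I Il Ir ll lr (q t) (dq t) *v dq t + gvec m ml mr ll lr g0 (q t)))
    (at t within S)"
  unfolding Ham_explicit Pot_def
  by (rule has_real_derivative_vec_nth[OF q] has_real_derivative_vec_nth[OF dq]
      coefficient_has_real_derivative_chain derivative_eq_intros refl)+
    (simp add: Dmat_def Cmat_def gvec_def Let_def inner_vec_def matrix_vector_mult_def sum_5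
      right_coefficients_eq algebra_simps power2_eq_square)

lemma continuous_on_Pot_comp:
  assumes "continuous_on S q"
  shows "continuous_on S (\<lambda>s. Pot m ml mr ll lr g0 (q s))"
proof -
  have "continuous_on UNIV Pq"
    using Pq_has_real_derivative by (meson DERIV_isCont continuous_at_imp_continuous_on)
  then have "continuous_on S (\<lambda>s. Pq (q s $ i))" for i
    using continuous_on_compose2 continuous_on_component[OF assms] by blast
  then show ?thesis
    unfolding Pot_def by (intro continuous_intros assms)
qed

theorem mainTheorem5:
  fixes m ml mr I Il Ir ll lr g0 T :: real
    and q dq ddq tau :: "real \<Rightarrow> real^5"
  assumes pos: "m > 0" "ml > 0" "mr > 0" "I > 0" "Il > 0" "Ir > 0" "ll > 0" "lr > 0" "g0 > 0"
    and T: "T > 0"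
    and tau_cont: "continuous_on {0..T} tau"
    and dq: "\<And>t. t \<in> {0..T} \<Longrightarrow> (q has_vector_derivative dq t) (at t within {0..T})"
    and ddq: "\<And>t. t \<in> {0..T} \<Longrightarrow> (dq has_vector_derivative ddq t) (at t within {0..T})"
    and ddq_cont: "continuous_on {0..T} ddq"
    and eqn: "\<And>t. t \<in> {0..T} \<Longrightarrow>
       Dmat m ml mr I Il Ir ll lr (q t) *v ddq t
       + Cmat m ml mr I Il Ir ll lr (q t) (dq t) *v dq t
       + gvec m ml mr ll lr g0 (q t) = tau t"
  defines "H \<equiv> \<lambda>t. Ham m ml mr I Il Ir ll lr g0 (q t) (dq t)"
  shows "(\<forall>t\<in>{0..T}. (H has_real_derivative (dq t \<bullet> tau t)) (at t within {0..T}))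
    \<and> ((\<lambda>t. dq t \<bullet> tau t) has_integral (H T - H 0)) {0..T}
    \<and> H T - H 0 \<ge> - H 0 + (INF s\<in>{0..T}. Pot m ml mr ll lr g0 (q s))"
proof -
  have power_balance: "(H has_real_derivative (dq t \<bullet> tau t)) (at t within {0..T})"
    if "t \<in> {0..T}" for t
    unfolding H_def eqn[OF that, symmetric] by (rule Ham_has_real_derivative[OF dq[OF that] ddq[OF that]])
  then have energy_integral: "((\<lambda>t. dq t \<bullet> tau t) has_integral (H T - H 0)) {0..T}"
    using T by (intro fundamental_theorem_of_calculus)
      (auto simp: has_real_derivative_iff_has_vector_derivative[symmetric])
  have "continuous_on {0..T} q"
    using dq by (meson continuous_on_eq_continuous_within has_vector_derivative_continuous)
  then have "bdd_below ((\<lambda>s. Pot m ml mr ll lr g0 (q s)) ` {0..T})"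
    by (intro bounded_imp_bdd_below compact_imp_bounded compact_continuous_image
        continuous_on_Pot_comp) auto
  then have "(INF s\<in>{0..T}. Pot m ml mr ll lr g0 (q s)) \<le> Pot m ml mr ll lr g0 (q T)"
    using T by (intro cInf_lower) auto
  also have "\<dots> \<le> H T" unfolding H_def using pos by (intro Pot_le_Ham) auto
  finally show ?thesis using power_balance energy_integral by auto
qed

end
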